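(* Consider the DAGP iteration described in the context, with parameters $\mu,\rho,\alpha>0$. Assume $\mathbf{W}$ has zero row sums, $\mathbf{Q}$ has zero column sums, $\ker(\mathbf{Q})=\ker(\mathbf{W}^T)$, and $\ker(\mathbf{W})=\mathrm{span}\{\mathbf{1}_M\}$. Let $(\mathbf{x}^v,\mathbf{g}^v,\mathbf{h}^v)_{v=1}^M$ be a fixed point of the DAGP iteration (i.e. if $(\mathbf{x}^v_k,\mathbf{g}^v_k,\mathbf{h}^v_k)=(\mathbf{x}^v,\mathbf{g}^v,\mathbf{h}^v)$ for all $v$, then the update produces $(\mathbf{x}^v_{k+1},\mathbf{g}^v_{k+1},\mathbf{h}^v_{k+1})=(\mathbf{x}^v,\mathbf{g}^v,\mathbf{h}^v)$ for all $v$) with $\sum_{v=1}^M\mathbf{h}^v=\mathbf{0}$. Then there is $\mathbf{x}\in\bigcap_{v=1}^M S^v$ with $\mathbf{x}^v=\mathbf{x}$ for all $v$, and $$\mathbf{0}\in\sum_{v=1}^M\big(\partial I_{S^v}(\mathbf{x})+\nabla f^v(\mathbf{x})\big),$$ so that $\mathbf{x}$ is an optimal solution of $\min_{\mathbf{x}\in\mathbb{R}^m}\frac1M\sum_{v=1}^Mf^v(\mathbf{x})$ subject to $\mathbf{x}\in\bigcap_{v=1}^MS^v$.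
   Context: There are $M$ agents $v\in\{1,\dots,M\}$. Each agent has a convex differentiable function $f^v:\mathbb{R}^m\to\mathbb{R}$ and a nonempty closed convex set $S^v\subseteq\mathbb{R}^m$. $\mathrm{P}_S(\mathbf{y})=\arg\min_{\mathbf{x}\in S}\|\mathbf{x}-\mathbf{y}\|_2$ is the Euclidean projection onto $S$. The normal cone is $\partial I_S(\mathbf{x})=\{\mathbf{g}:\mathbf{g}^T(\mathbf{z}-\mathbf{x})\le 0\ \forall \mathbf{z}\in S\}$ for $\mathbf{x}\in S$ and $\emptyset$ otherwise; the sum of sets is the Minkowski sum. $\mathbf{W}=[w_{vu}]$ and $\mathbf{Q}=[q_{vu}]$ are real $M\times M$ matrices. DAGP (Double Averaging and Gradient Projection) with parameters $\mu,\rho,\alpha>0$ maintains, for each agent $v$, vectors $\mathbf{x}^v_k,\mathbf{g}^v_k,\mathbf{h}^v_k\in\mathbb{R}^m$ and updates, for $k\ge0$ and all $v$: $\mathbf{z}^v_{k+1}=\mathbf{x}^v_k-\sum_{u=1}^M w_{vu}\mathbf{x}^u_k-\mu(\nabla f^v(\mathbf{x}^v_k)-\mathbf{g}^v_k)$; $\mathbf{x}^v_{k+1}=\mathrm{P}_{S^v}(\mathbf{z}^v_{k+1})$; $\mathbf{g}^v_{k+1}=\mathbf{g}^v_k+\rho\big[\nabla f^v(\mathbf{x}^v_k)-\mathbf{g}^v_k+\tfrac1\mu(\mathbf{z}^v_{k+1}-\mathbf{x}^v_{k+1})\big]+\alpha(\mathbf{h}^v_k-\mathbf{g}^v_k)$;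 $\mathbf{h}^v_{k+1}=\mathbf{h}^v_k-\sum_{u=1}^M q_{vu}(\mathbf{h}^u_k-\mathbf{g}^u_k)$. *)

theory Defs
  imports "HOL-Analysis.Analysis"
begin

text \<open>Normal cone of S at x (subdifferential of the indicator function of S):
  empty outside S.\<close>
definition normal_cone :: "'a::real_inner set \<Rightarrow> 'a \<Rightarrow> 'a set" where
  "normal_cone S x = (if x \<in> S then {g. \<forall>z\<in>S. g \<bullet> (z - x) \<le> 0} else {})"

definition mat_ker :: "real^'n^'n \<Rightarrow> (real^'n) set" where
  "mat_ker A = {c. A *v c = 0}"

end

theory Submission
  imports Defs
begin

text \<open>At a fixed point the projection step makes \<open>(z\<^sup>v - x\<^sup>v)/\<mu>\<close> a normal vector of \<open>S\<^sup>v\<close>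
  at \<open>x\<^sup>v\<close>, and the \<open>g\<close>-update forces \<open>W x = (\<alpha>\<mu>/\<rho>)(h - g)\<close>, while the \<open>h\<close>-update gives
  \<open>Q(h - g) = 0\<close>, hence \<open>W\<^sup>T(h - g) = 0\<close>. Pairing the two identities,
  \<open>(\<alpha>\<mu>/\<rho>) \<parallel>h - g\<parallel>\<^sup>2 = \<langle>h - g, W x\<rangle> = \<langle>W\<^sup>T(h - g), x\<rangle> = 0\<close>, so \<open>g = h\<close> and \<open>W x = 0\<close>;
  the kernel of \<open>W\<close> then forces consensus \<open>x\<^sup>v = x\<close>. The normal vectors become
  \<open>g\<^sup>v - \<nabla>f\<^sup>v(x)\<close>, whose sum with the gradients is \<open>\<Sum>h\<^sup>v = 0\<close>, and the first-order
  optimality condition for convex functions yields optimality.\<close>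

text \<open>The action of \<open>A \<otimes> I\<^sub>m\<close> on the stacked vector \<open>(x\<^sup>1, \<dots>, x\<^sup>M)\<close>.\<close>
definition mat_family :: "real^'n^'n \<Rightarrow> ('n \<Rightarrow> 'a::real_vector) \<Rightarrow> 'n \<Rightarrow> 'a" where
  "mat_family A x v = (\<Sum>u\<in>UNIV. (A $ v $ u) *\<^sub>R x u)"

lemma mat_family_inner_left:
  "(\<chi> w. mat_family A x w \<bullet> b) = A *v (\<chi> u. x u \<bullet> b)"
  by (simp add: vec_eq_iff mat_family_def matrix_vector_mult_def inner_sum_left mult.commute)

lemma mat_family_eq_0_if_mat_ker_subset:
  fixes d :: "'n::finite \<Rightarrow> 'a::real_inner"
  assumes ker: "mat_ker A \<subseteq> mat_ker B" and Ad: "\<And>w. mat_family A d w = 0"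
  shows "mat_family B d v = 0"
proof -
  let ?b = "mat_family B d v"
  have "A *v (\<chi> u. d u \<bullet> ?b) = 0"
    using Ad by (simp flip: mat_family_inner_left add: vec_eq_iff)
  with ker have "B *v (\<chi> u. d u \<bullet> ?b) = 0"
    unfolding mat_ker_def by auto
  then have "(\<chi> w. mat_family B d w \<bullet> ?b) $ v = 0"
    by (simp only: mat_family_inner_left) simp
  then show ?thesis by simp
qed

lemma mat_family_eq_0_imp_constant:
  fixes x :: "'n::finite \<Rightarrow> 'a::real_inner"
  assumes ker: "mat_ker A \<subseteq> span {1}" and Ax: "\<And>w. mat_family A x w = 0"
  shows "x u = x v"
proof -
  let ?c = "\<chi> w. x w \<bullet> (x u - x v)"
  have "A *v ?c = 0"
    using Ax by (simp flip: mat_family_inner_left add: vec_eq_iff)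
  with ker obtain k where "?c = k *\<^sub>R 1"
    unfolding mat_ker_def by (auto simp: span_singleton)
  then have "?c $ u = ?c $ v" by simp
  then have "(x u - x v) \<bullet> (x u - x v) = 0"
    by (simp add: inner_diff_left)
  then show ?thesis by simp
qed

lemma sum_inner_mat_family_transpose:
  fixes d x :: "'n::finite \<Rightarrow> 'a::real_inner"
  shows "(\<Sum>v\<in>UNIV. d v \<bullet> mat_family A x v) = (\<Sum>u\<in>UNIV. mat_family (transpose A) d u \<bullet> x u)"
proof -
  have "(\<Sum>v\<in>UNIV. d v \<bullet> mat_family A x v) = (\<Sum>v\<in>UNIV. \<Sum>u\<in>UNIV. A $ v $ u * (d v \<bullet> x u))"
    by (simp add: mat_family_def inner_sum_right)
  also have "\<dots> = (\<Sum>u\<in>UNIV. \<Sum>v\<in>UNIV. A $ v $ u * (d v \<bullet> x u))"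
    by (rule sum.swap)
  also have "\<dots> = (\<Sum>u\<in>UNIV. mat_family (transpose A) d u \<bullet> x u)"
    by (simp add: mat_family_def inner_sum_left transpose_def)
  finally show ?thesis .
qed

lemma mat_family_residual_eq_0:
  fixes x d :: "'n::finite \<Rightarrow> 'a::real_inner"
  assumes "c > 0"
    and ker: "mat_ker Q \<subseteq> mat_ker (transpose W)"
    and Qd: "\<And>w. mat_family Q d w = 0"
    and Wx: "\<And>v. mat_family W x v = c *\<^sub>R d v"
  shows "d v = 0"
proof -
  have "(\<Sum>v\<in>UNIV. c * (d v \<bullet> d v)) = (\<Sum>v\<in>UNIV. d v \<bullet> mat_family W x v)"
    by (simp add: Wx)
  also have "\<dots> = 0"
    using mat_family_eq_0_if_mat_ker_subset[OF ker Qd]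
    by (simp add: sum_inner_mat_family_transpose)
  finally have "\<forall>v\<in>UNIV. c * (d v \<bullet> d v) = 0"
    using \<open>c > 0\<close> by (subst (asm) sum_nonneg_eq_0_iff) auto
  then show ?thesis
    using \<open>c > 0\<close> by auto
qed

lemma closest_point_normal_cone:
  assumes "convex S" "closed S" "S \<noteq> {}" "c \<ge> 0"
  shows "c *\<^sub>R (z - closest_point S z) \<in> normal_cone S (closest_point S z)"
  using closest_point_in_set[OF assms(2,3)] closest_point_dot[OF assms(1,2)] \<open>c \<ge> 0\<close>
  by (simp add: normal_cone_def mult_nonneg_nonpos)

lemma closest_point_gradient_step_normal_cone:
  assumes "convex S" "closed S" "S \<noteq> {}" "\<mu> > 0"
    and fixed: "closest_point S (x - \<mu> *\<^sub>R d) = x"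
  shows "- d \<in> normal_cone S x"
proof -
  have "- d = (1 / \<mu>) *\<^sub>R ((x - \<mu> *\<^sub>R d) - closest_point S (x - \<mu> *\<^sub>R d))"
    using \<open>\<mu> > 0\<close> by (simp add: fixed)
  then show ?thesis
    using closest_point_normal_cone[OF assms(1-3), of "1 / \<mu>" "x - \<mu> *\<^sub>R d"] \<open>\<mu> > 0\<close>
    by (simp add: fixed)
qed

lemma convex_on_imp_above_tangent_plane:
  fixes f :: "'a::euclidean_space \<Rightarrow> real"
  assumes cv: "convex_on UNIV f" and gr: "(f has_derivative (\<lambda>d. G \<bullet> d)) (at x)"
  shows "f x + G \<bullet> (y - x) \<le> f y"
proof -
  define d where "d = y - x"
  define g where "g = (\<lambda>t::real. f (x + t *\<^sub>R d))"
  have "convex_on UNIV g"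
  proof (rule convex_onI)
    fix t a b :: real assume t: "t > 0" "t < 1"
    have "x + ((1 - t) *\<^sub>R a + t *\<^sub>R b) *\<^sub>R d = (1 - t) *\<^sub>R (x + a *\<^sub>R d) + t *\<^sub>R (x + b *\<^sub>R d)"
      by (simp add: algebra_simps)
    then show "g ((1 - t) *\<^sub>R a + t *\<^sub>R b) \<le> (1 - t) * g a + t * g b"
      unfolding g_def using convex_onD[OF cv, of t] t by simp
  qed simp
  moreover have "(g has_field_derivative (G \<bullet> d)) (at 0 within UNIV)"
  proof -
    have line: "((\<lambda>t::real. x + t *\<^sub>R d) has_derivative (\<lambda>t. t *\<^sub>R d)) (at 0)"
      by (auto intro!: derivative_eq_intros)
    have "(f has_derivative (\<lambda>d. G \<bullet> d)) (at (x + 0 *\<^sub>R d))"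
      using gr by simp
    from has_derivative_compose[OF line this]
    have "(g has_derivative (\<lambda>t. G \<bullet> (t *\<^sub>R d))) (at 0)"
      by (simp add: g_def)
    moreover have "(\<lambda>t. G \<bullet> (t *\<^sub>R d)) = (*) (G \<bullet> d)"
      by (simp add: fun_eq_iff)
    ultimately show ?thesis
      by (simp add: has_field_derivative_def)
  qed
  ultimately have "g 1 - g 0 \<ge> (G \<bullet> d) * (1 - 0)"
    by (intro convex_on_imp_above_tangent[where A=UNIV]) auto
  then show ?thesis by (simp add: g_def d_def)
qed

lemma normal_cone_stationary_imp_minimum:
  fixes f :: "'n::finite \<Rightarrow> 'a::euclidean_space \<Rightarrow> real"
  assumes cv: "\<And>v. convex_on UNIV (f v)"
    and gr: "\<And>v. (f v has_derivative (\<lambda>d. G v \<bullet> d)) (at x)"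
    and N: "\<And>v. g v \<in> normal_cone (S v) x"
    and stat: "(\<Sum>v\<in>UNIV. g v + G v) = 0"
    and y: "y \<in> (\<Inter>v. S v)"
  shows "(\<Sum>v\<in>UNIV. f v x) \<le> (\<Sum>v\<in>UNIV. f v y)"
proof -
  have Ny: "g v \<bullet> (y - x) \<le> 0" for v
    using N[of v] y by (auto simp: normal_cone_def split: if_splits)
  have "0 = (\<Sum>v\<in>UNIV. g v + G v) \<bullet> (y - x)"
    by (simp add: stat)
  also have "\<dots> = (\<Sum>v\<in>UNIV. g v \<bullet> (y - x)) + (\<Sum>v\<in>UNIV. G v \<bullet> (y - x))"
    by (simp add: inner_sum_left inner_add_left sum.distrib)
  also have "\<dots> \<le> (\<Sum>v\<in>UNIV. G v \<bullet> (y - x))"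
    using Ny by (simp add: sum_nonpos)
  finally have "(\<Sum>v\<in>UNIV. f v x) \<le> (\<Sum>v\<in>UNIV. f v x + G v \<bullet> (y - x))"
    by (simp add: sum.distrib)
  also have "\<dots> \<le> (\<Sum>v\<in>UNIV. f v y)"
    by (intro sum_mono convex_on_imp_above_tangent_plane[OF cv gr])
  finally show ?thesis .
qed

lemma dagp_gradient_update_fixed:
  fixes x Wx grad g h :: "'a::real_vector"
  assumes "\<mu> > 0" "\<rho> > 0"
    and "g + \<rho> *\<^sub>R (grad - g + (1 / \<mu>) *\<^sub>R ((x - Wx - \<mu> *\<^sub>R (grad - g)) - x))
           + \<alpha> *\<^sub>R (h - g) = g"
  shows "Wx = (\<alpha> * \<mu> / \<rho>) *\<^sub>R (h - g)"
proof -
  have "grad - g + (1 / \<mu>) *\<^sub>R ((x - Wx - \<mu> *\<^sub>R (grad - g)) - x) = - (1 / \<mu>) *\<^sub>R Wx"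
    using \<open>\<mu> > 0\<close> by (simp add: algebra_simps)
  with assms(3) have "\<rho> *\<^sub>R (- (1 / \<mu>) *\<^sub>R Wx) + \<alpha> *\<^sub>R (h - g) = 0"
    by (simp add: add.assoc)
  then have "Wx = (\<mu> / \<rho>) *\<^sub>R (\<alpha> *\<^sub>R (h - g))"
    using assms(1,2) by (simp add: algebra_simps)
  then show ?thesis
    by (simp add: field_simps)
qed

theorem theorem1:
  fixes W Q :: "real^'M^'M"
    and f :: "'M \<Rightarrow> 'a::euclidean_space \<Rightarrow> real"
    and gradf :: "'M \<Rightarrow> 'a \<Rightarrow> 'a"
    and S :: "'M \<Rightarrow> 'a set"
    and \<mu> \<rho> \<alpha> :: real
    and xs gs hs :: "'M \<Rightarrow> 'a"
  assumes params: "\<mu> > 0" "\<rho> > 0" "\<alpha> > 0"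
    and f_convex: "\<And>v. convex_on UNIV (f v)"
    and f_grad: "\<And>v y. (f v has_derivative (\<lambda>d. gradf v y \<bullet> d)) (at y)"
    and S_closed: "\<And>v. closed (S v)"
    and S_convex: "\<And>v. convex (S v)"
    and S_nonempty: "\<And>v. S v \<noteq> {}"
    and W_rows: "W *v (1::real^'M) = 0"
    and Q_cols: "transpose Q *v (1::real^'M) = 0"
    and ker_Q: "mat_ker Q = mat_ker (transpose W)"
    and ker_W: "mat_ker W = span {1::real^'M}"
    and fixed_point: "\<And>v. let z = xs v - (\<Sum>u\<in>UNIV. (W $ v $ u) *\<^sub>R xs u)
                                   - \<mu> *\<^sub>R (gradf v (xs v) - gs v)
            in closest_point (S v) z = xs v
             \<and> gs v + \<rho> *\<^sub>R (gradf v (xs v) - gs v + (1 / \<mu>) *\<^sub>R (z - closest_point (S v) z))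
                 + \<alpha> *\<^sub>R (hs v - gs v) = gs v
             \<and> hs v - (\<Sum>u\<in>UNIV. (Q $ v $ u) *\<^sub>R (hs u - gs u)) = hs v"
    and h_sum: "(\<Sum>v\<in>UNIV. hs v) = 0"
  shows "\<exists>x \<in> (\<Inter>v. S v). (\<forall>v. xs v = x)
           \<and> (\<exists>g :: 'M \<Rightarrow> 'a. (\<forall>v. g v \<in> normal_cone (S v) x)
                 \<and> (\<Sum>v\<in>UNIV. g v + gradf v x) = 0)
           \<and> (\<forall>y \<in> (\<Inter>v. S v). (1 / real CARD('M)) * (\<Sum>v\<in>UNIV. f v x)
                                 \<le> (1 / real CARD('M)) * (\<Sum>v\<in>UNIV. f v y))"
proof -
  define z where "z v = xs v - mat_family W xs v - \<mu> *\<^sub>R (gradf v (xs v) - gs v)" for v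
  have proj: "closest_point (S v) (z v) = xs v"
    and g_fixed: "gs v + \<rho> *\<^sub>R (gradf v (xs v) - gs v + (1 / \<mu>) *\<^sub>R (z v - xs v))
                    + \<alpha> *\<^sub>R (hs v - gs v) = gs v"
    and h_fixed: "mat_family Q (\<lambda>u. hs u - gs u) v = 0" for v
    using fixed_point[of v] by (auto simp: Let_def z_def mat_family_def)
  have Wx: "mat_family W xs v = (\<alpha> * \<mu> / \<rho>) *\<^sub>R (hs v - gs v)" for v
    using dagp_gradient_update_fixed[OF params(1,2)] g_fixed[of v] by (simp add: z_def)
  have residual: "hs v - gs v = 0" for v
    by (rule mat_family_residual_eq_0[OF _ _ h_fixed Wx]) (use params ker_Q in auto)
  with Wx have W0: "mat_family W xs v = 0" for v
    by simp
  then obtain x where consensus: "\<And>v. xs v = x"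
    using mat_family_eq_0_imp_constant ker_W by (metis order_refl)
  have N: "gs v - gradf v x \<in> normal_cone (S v) x" for v
  proof -
    have "closest_point (S v) (x - \<mu> *\<^sub>R (gradf v x - gs v)) = x"
      using proj[of v] W0[of v] by (simp add: z_def consensus)
    from closest_point_gradient_step_normal_cone[OF S_convex S_closed S_nonempty params(1) this]
    show ?thesis by simp
  qed
  have x_in_S: "x \<in> (\<Inter>v. S v)"
    using N by (metis INT_I empty_iff normal_cone_def)
  have stationary: "(\<Sum>v\<in>UNIV. (gs v - gradf v x) + gradf v x) = 0"
    using residual h_sum by simp
  show ?thesis
    using x_in_S consensus N stationary
      normal_cone_stationary_imp_minimum[OF f_convex f_grad N stationary]
    by (intro bexI[of _ x]) (auto intro!: divide_right_mono exI[of _ "\<lambda>v. gs v - gradf v x"])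
qed

end
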